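(* Graphs $G=(U,\alpha)$ and $H=(V,\beta)$ are weakly disjoint if and only if they are $c$-disjoint for every cost function $c:U\times V\to[0,\infty)$.
   Context: A weight function on finite $U$ is $\alpha:U\times U\to\mathbb{R}$, $\alpha\ge0$, symmetric, summing to $1$; degree $p(u)=\sum_{u'}\alpha(u,u')$; a graph is $(U,\alpha)$. For graphs $(U,\alpha)$, $(V,\beta)$ with degrees $p,q$, a weight joining is a weight function $\gamma$ on $U\times V$ with degree $r(u,v)=\sum_{(u',v')}\gamma((u,v),(u',v'))$ such that $\sum_v r(u,v)=p(u)$, $\sum_u r(u,v)=q(v)$, $p(u)\sum_{\tilde v}\gamma((u,v),(u',\tilde v))=\alpha(u,u')r(u,v)$ and $q(v)\sum_{\tilde u}\gamma((u,v),(\tilde u,v'))=\beta(v,v')r(u,v)$ for all $u,u',v,v'$; a graph joining is $K=(U\times V,\gamma)$ with $\gamma$ a weight joining, with degree function $r_K$. The graphs are weakly disjoint if every graph joining has $r_K(u,v)=p(u)q(v)$. They are $c$-disjoint for $c:U\times V\to[0,\infty)$ if $\min_K\sum_{(u,v)}c(u,v)r_K(u,v)=\sum_{(u,v)}c(u,v)p(u)q(v)$, the minimum over all graph joinings $K$. *)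

theory Defs
  imports Complex_Main
begin

definition weight_fun :: "('a::finite \<Rightarrow> 'a \<Rightarrow> real) \<Rightarrow> bool" where
  "weight_fun \<alpha> \<longleftrightarrow> (\<forall>x y. \<alpha> x y \<ge> 0) \<and> (\<forall>x y. \<alpha> x y = \<alpha> y x)
     \<and> (\<Sum>x\<in>UNIV. \<Sum>y\<in>UNIV. \<alpha> x y) = 1"

definition degree :: "('a::finite \<Rightarrow> 'a \<Rightarrow> real) \<Rightarrow> 'a \<Rightarrow> real" where
  "degree \<alpha> u = (\<Sum>u'\<in>UNIV. \<alpha> u u')"

definition weight_joining ::
  "('u::finite \<Rightarrow> 'u \<Rightarrow> real) \<Rightarrow> ('v::finite \<Rightarrow> 'v \<Rightarrow> real)
     \<Rightarrow> ('u \<times> 'v \<Rightarrow> 'u \<times> 'v \<Rightarrow> real) \<Rightarrow> bool" where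
  "weight_joining \<alpha> \<beta> \<gamma> \<longleftrightarrow> weight_fun \<gamma>
     \<and> (\<forall>u. (\<Sum>v\<in>UNIV. degree \<gamma> (u, v)) = degree \<alpha> u)
     \<and> (\<forall>v. (\<Sum>u\<in>UNIV. degree \<gamma> (u, v)) = degree \<beta> v)
     \<and> (\<forall>u u' v. degree \<alpha> u * (\<Sum>v'\<in>UNIV. \<gamma> (u, v) (u', v'))
                    = \<alpha> u u' * degree \<gamma> (u, v))
     \<and> (\<forall>u v v'. degree \<beta> v * (\<Sum>u'\<in>UNIV. \<gamma> (u, v) (u', v'))
                    = \<beta> v v' * degree \<gamma> (u, v))"

definition weakly_disjoint ::
  "('u::finite \<Rightarrow> 'u \<Rightarrow> real) \<Rightarrow> ('v::finite \<Rightarrow> 'v \<Rightarrow> real) \<Rightarrow> bool" where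
  "weakly_disjoint \<alpha> \<beta> \<longleftrightarrow> (\<forall>\<gamma>. weight_joining \<alpha> \<beta> \<gamma> \<longrightarrow>
     (\<forall>u v. degree \<gamma> (u, v) = degree \<alpha> u * degree \<beta> v))"

definition joining_cost ::
  "('u::finite \<times> 'v::finite \<Rightarrow> real) \<Rightarrow> ('u \<times> 'v \<Rightarrow> 'u \<times> 'v \<Rightarrow> real) \<Rightarrow> real" where
  "joining_cost c \<gamma> = (\<Sum>x\<in>UNIV. c x * degree \<gamma> x)"

definition c_disjoint ::
  "('u::finite \<Rightarrow> 'u \<Rightarrow> real) \<Rightarrow> ('v::finite \<Rightarrow> 'v \<Rightarrow> real) \<Rightarrow> ('u \<times> 'v \<Rightarrow> real) \<Rightarrow> bool" where
  "c_disjoint \<alpha> \<beta> c \<longleftrightarrow>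
     (let m = (\<Sum>(u, v)\<in>UNIV. c (u, v) * degree \<alpha> u * degree \<beta> v) in
       (\<exists>\<gamma>. weight_joining \<alpha> \<beta> \<gamma> \<and> joining_cost c \<gamma> = m)
       \<and> (\<forall>\<gamma>. weight_joining \<alpha> \<beta> \<gamma> \<longrightarrow> m \<le> joining_cost c \<gamma>))"

end

theory Submission
  imports Defs
begin

text \<open>The product weight is a graph joining, and under weak disjointness every joining
  has its degree function, so all joinings cost the same and the minimum is attained.
  Conversely, c-disjointness for the cost concentrated on a single pair (u, v) says
  that every joining has degree at least p(u) q(v) at (u, v); as both degree functions
  have total mass 1, they agree everywhere.\<close>

lemma sum_degree_eq_1:
  assumes "weight_fun \<alpha>"
  shows "(\<Sum>u\<in>UNIV. degree \<alpha> u) = 1"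
  using assms by (simp add: weight_fun_def degree_def)

lemma sum_UNIV_prod:
  fixes f :: "'a::finite \<times> 'b::finite \<Rightarrow> 'c::comm_monoid_add"
  shows "sum f UNIV = (\<Sum>a\<in>UNIV. \<Sum>b\<in>UNIV. f (a, b))"
  by (simp add: sum.cartesian_product flip: UNIV_Times_UNIV)

lemma sum_product_degrees_eq_1:
  assumes "weight_fun \<alpha>" and "weight_fun \<beta>"
  shows "(\<Sum>(u, v)\<in>UNIV. degree \<alpha> u * degree \<beta> v) = 1"
  by (simp add: sum_UNIV_prod sum_degree_eq_1[OF assms(1)] sum_degree_eq_1[OF assms(2)]
      flip: sum_product)

definition product_weight ::
  "('u::finite \<Rightarrow> 'u \<Rightarrow> real) \<Rightarrow> ('v::finite \<Rightarrow> 'v \<Rightarrow> real) \<Rightarrow> ('u \<times> 'v \<Rightarrow> 'u \<times> 'v \<Rightarrow> real)"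
  where "product_weight \<alpha> \<beta> = (\<lambda>(u, v) (u', v'). \<alpha> u u' * \<beta> v v')"

lemma product_weight_apply [simp]:
  "product_weight \<alpha> \<beta> (u, v) (u', v') = \<alpha> u u' * \<beta> v v'"
  by (simp add: product_weight_def)

lemma degree_product_weight:
  "degree (product_weight \<alpha> \<beta>) (u, v) = degree \<alpha> u * degree \<beta> v"
  by (simp add: degree_def sum_UNIV_prod sum_product)

lemma weight_fun_product_weight:
  assumes "weight_fun \<alpha>" and "weight_fun \<beta>"
  shows "weight_fun (product_weight \<alpha> \<beta>)"
  unfolding weight_fun_def
proof (intro conjI allI)
  fix x y :: "'a \<times> 'b"
  show "product_weight \<alpha> \<beta> x y \<ge> 0"
    using assms by (cases x; cases y) (simp add: weight_fun_def)
  show "product_weight \<alpha> \<beta> x y = product_weight \<alpha> \<beta> y x"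
    using assms by (cases x; cases y) (simp add: weight_fun_def)
next
  have "(\<Sum>x\<in>UNIV. \<Sum>y\<in>UNIV. product_weight \<alpha> \<beta> x y)
      = (\<Sum>x\<in>UNIV. degree (product_weight \<alpha> \<beta>) x)"
    by (simp add: degree_def)
  also have "\<dots> = (\<Sum>(u, v)\<in>UNIV. degree \<alpha> u * degree \<beta> v)"
    by (rule sum.cong) (auto simp: degree_product_weight)
  also have "\<dots> = 1"
    using assms by (rule sum_product_degrees_eq_1)
  finally show "(\<Sum>x\<in>UNIV. \<Sum>y\<in>UNIV. product_weight \<alpha> \<beta> x y) = 1" .
qed

lemma weight_joining_product_weight:
  assumes "weight_fun \<alpha>" and "weight_fun \<beta>"
  shows "weight_joining \<alpha> \<beta> (product_weight \<alpha> \<beta>)"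
  unfolding weight_joining_def
proof (intro conjI allI)
  show "weight_fun (product_weight \<alpha> \<beta>)"
    using assms by (rule weight_fun_product_weight)
  fix u u' v v'
  show "(\<Sum>v\<in>UNIV. degree (product_weight \<alpha> \<beta>) (u, v)) = degree \<alpha> u"
    using assms(2) by (simp add: degree_product_weight sum_degree_eq_1 flip: sum_distrib_left)
  show "(\<Sum>u\<in>UNIV. degree (product_weight \<alpha> \<beta>) (u, v)) = degree \<beta> v"
    using assms(1) by (simp add: degree_product_weight sum_degree_eq_1 flip: sum_distrib_right)
  show "degree \<alpha> u * (\<Sum>v'\<in>UNIV. product_weight \<alpha> \<beta> (u, v) (u', v'))
      = \<alpha> u u' * degree (product_weight \<alpha> \<beta>) (u, v)"
    by (simp add: degree_product_weight degree_def[of \<beta>] sum_distrib_left mult_ac)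
  show "degree \<beta> v * (\<Sum>u'\<in>UNIV. product_weight \<alpha> \<beta> (u, v) (u', v'))
      = \<beta> v v' * degree (product_weight \<alpha> \<beta>) (u, v)"
    by (simp add: degree_product_weight degree_def[of \<alpha>] sum_distrib_left sum_distrib_right mult_ac)
qed

lemma weakly_disjoint_imp_c_disjoint:
  assumes "weight_fun \<alpha>" and "weight_fun \<beta>" and "weakly_disjoint \<alpha> \<beta>"
  shows "c_disjoint \<alpha> \<beta> c"
proof -
  have "joining_cost c \<gamma> = (\<Sum>(u, v)\<in>UNIV. c (u, v) * degree \<alpha> u * degree \<beta> v)"
    if "weight_joining \<alpha> \<beta> \<gamma>" for \<gamma>
    using assms(3) that unfolding weakly_disjoint_def joining_cost_def
    by (intro sum.cong) (auto simp: mult.assoc)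
  then show ?thesis
    using weight_joining_product_weight[OF assms(1,2)]
    unfolding c_disjoint_def Let_def by auto
qed

lemma sum_of_bool_eq_mult:
  fixes f :: "'a::finite \<Rightarrow> 'b::comm_semiring_1"
  shows "(\<Sum>x\<in>UNIV. of_bool (x = a) * f x) = f a"
  by simp

lemma joining_cost_point_cost:
  "joining_cost (\<lambda>y. of_bool (y = x)) \<gamma> = degree \<gamma> x"
  by (simp add: joining_cost_def)

lemma degree_product_le_degree_joining:
  assumes "c_disjoint \<alpha> \<beta> (\<lambda>y. of_bool (y = (u, v)))"
    and "weight_joining \<alpha> \<beta> \<gamma>"
  shows "degree \<alpha> u * degree \<beta> v \<le> degree \<gamma> (u, v)"
proof -
  have "(\<Sum>(u', v')\<in>UNIV. of_bool ((u', v') = (u, v)) * degree \<alpha> u' * degree \<beta> v')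
      = degree \<alpha> u * degree \<beta> v"
    using sum_of_bool_eq_mult[of "(u, v)" "\<lambda>(u', v'). degree \<alpha> u' * degree \<beta> v'"]
    by (simp only: case_prod_beta' mult.assoc prod.collapse fst_conv snd_conv)
  then show ?thesis
    using assms unfolding c_disjoint_def Let_def joining_cost_point_cost by metis
qed

lemma weakly_disjointI_point_costs:
  assumes "weight_fun \<alpha>" and "weight_fun \<beta>"
    and "\<And>x. c_disjoint \<alpha> \<beta> (\<lambda>y. of_bool (y = x))"
  shows "weakly_disjoint \<alpha> \<beta>"
  unfolding weakly_disjoint_def
proof (intro allI impI)
  fix \<gamma> u v
  assume joining: "weight_joining \<alpha> \<beta> \<gamma>"
  let ?pq = "\<lambda>(u, v). degree \<alpha> u * degree \<beta> v"
  have "sum ?pq UNIV = 1"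
    using assms(1,2) by (rule sum_product_degrees_eq_1)
  moreover have "sum (degree \<gamma>) UNIV = 1"
    using joining unfolding weight_joining_def by (blast intro: sum_degree_eq_1)
  ultimately have sums_eq: "sum ?pq UNIV = sum (degree \<gamma>) UNIV"
    by simp
  have le: "?pq x \<le> degree \<gamma> x" for x
    using degree_product_le_degree_joining[OF assms(3) joining] by (cases x) simp
  have "?pq (u, v) = degree \<gamma> (u, v)"
    using sum_mono_inv[OF sums_eq le] by simp
  then show "degree \<gamma> (u, v) = degree \<alpha> u * degree \<beta> v"
    by simp
qed

theorem proposition3p2:
  fixes \<alpha> :: "'u::finite \<Rightarrow> 'u \<Rightarrow> real" and \<beta> :: "'v::finite \<Rightarrow> 'v \<Rightarrow> real"
  assumes "weight_fun \<alpha>" and "weight_fun \<beta>"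
  shows "weakly_disjoint \<alpha> \<beta> \<longleftrightarrow>
           (\<forall>c :: 'u \<times> 'v \<Rightarrow> real. (\<forall>x. c x \<ge> 0) \<longrightarrow> c_disjoint \<alpha> \<beta> c)"
proof
  assume "weakly_disjoint \<alpha> \<beta>"
  then show "\<forall>c. (\<forall>x. c x \<ge> 0) \<longrightarrow> c_disjoint \<alpha> \<beta> c"
    using weakly_disjoint_imp_c_disjoint[OF assms] by blast
next
  assume "\<forall>c :: 'u \<times> 'v \<Rightarrow> real. (\<forall>x. c x \<ge> 0) \<longrightarrow> c_disjoint \<alpha> \<beta> c"
  then have "c_disjoint \<alpha> \<beta> (\<lambda>y. of_bool (y = x))" for x
    by simp
  then show "weakly_disjoint \<alpha> \<beta>"
    using weakly_disjointI_point_costs[OF assms] by blast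
qed

end
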